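(* Let $G$ be a graph with no isolated vertices and $b_{tR}(G)<\infty$, and let $B$ be a $b_{tR}(G)$-set. Then $\gamma_{tR}(G)+1\le \gamma_{tR}(G-B)\le \gamma_{tR}(G)+2$. Both bounds are sharp: the upper bound is attained by the bistars $S_{p,q}$ with $q\ge p\ge 2$, and the lower bound by $S_{1,q}$ with $q\ge2$.
   Context: A TRDF on $G=(V,E)$ is a function $f:V\to\{0,1,2\}$ such that every $v$ with $f(v)=0$ has a neighbor $u$ with $f(u)=2$ and the subgraph induced by $\{v:f(v)>0\}$ has no isolated vertices; $\gamma_{tR}(G)$ is the minimum weight $\sum_v f(v)$ of a TRDF. $b_{tR}(G)$ is the minimum $|E'|$, $E'\subseteq E(G)$, such that $G-E'$ has no isolated vertices and $\gamma_{tR}(G-E')>\gamma_{tR}(G)$ ($\infty$ if none). A $b_{tR}(G)$-set is an edge set $B$ with $|B|=b_{tR}(G)$, $G-B$ without isolated vertices, and $\gamma_{tR}(G-B)>\gamma_{tR}(G)$. The bistar $S_{r,s}$ is the tree of diameter 3 whose two central vertices are adjacent to $r$ and $s$ leaves respectively. *)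

theory Defs
  imports Main "HOL-Library.Extended_Nat"
begin

definition graph :: "'a set \<Rightarrow> 'a set set \<Rightarrow> bool" where
  "graph V E \<longleftrightarrow> finite V \<and> (\<forall>e\<in>E. e \<subseteq> V \<and> card e = 2)"

definition no_isolated :: "'a set \<Rightarrow> 'a set set \<Rightarrow> bool" where
  "no_isolated V E \<longleftrightarrow> (\<forall>v\<in>V. \<exists>u. {u, v} \<in> E)"

definition trdf :: "'a set \<Rightarrow> 'a set set \<Rightarrow> ('a \<Rightarrow> nat) \<Rightarrow> bool" where
  "trdf V E f \<longleftrightarrow>
     (\<forall>v\<in>V. f v \<le> 2) \<and>
     (\<forall>v\<in>V. f v = 0 \<longrightarrow> (\<exists>u\<in>V. {u, v} \<in> E \<and> f u = 2)) \<and>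
     (\<forall>v\<in>V. f v > 0 \<longrightarrow> (\<exists>u\<in>V. {u, v} \<in> E \<and> f u > 0))"

definition weight :: "'a set \<Rightarrow> ('a \<Rightarrow> nat) \<Rightarrow> nat" where
  "weight V f = (\<Sum>v\<in>V. f v)"

definition gamma_tR :: "'a set \<Rightarrow> 'a set set \<Rightarrow> nat" where
  "gamma_tR V E = (LEAST w. \<exists>f. trdf V E f \<and> weight V f = w)"

definition btR_candidate :: "'a set \<Rightarrow> 'a set set \<Rightarrow> 'a set set \<Rightarrow> bool" where
  "btR_candidate V E E' \<longleftrightarrow> E' \<subseteq> E \<and> no_isolated V (E - E') \<and>
      gamma_tR V (E - E') > gamma_tR V E"

definition b_tR :: "'a set \<Rightarrow> 'a set set \<Rightarrow> enat" where
  "b_tR V E = (if \<exists>E'. btR_candidate V E E'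
               then enat (LEAST k. \<exists>E'. btR_candidate V E E' \<and> card E' = k)
               else \<infinity>)"

definition btR_set :: "'a set \<Rightarrow> 'a set set \<Rightarrow> 'a set set \<Rightarrow> bool" where
  "btR_set V E B \<longleftrightarrow> btR_candidate V E B \<and> enat (card B) = b_tR V E"

text \<open>Bistar S_{r,s} on nat: centres 0 and 1, leaves 2..r+1 of 0, leaves r+2..r+s+1 of 1.\<close>
definition bistar_V :: "nat \<Rightarrow> nat \<Rightarrow> nat set" where
  "bistar_V r s = {0..r + s + 1}"

definition bistar_E :: "nat \<Rightarrow> nat \<Rightarrow> nat set set" where
  "bistar_E r s = {{0, 1}} \<union> {{0, i} | i. 2 \<le> i \<and> i \<le> r + 1}
                   \<union> {{1, i} | i. r + 2 \<le> i \<and> i \<le> r + s + 1}"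

end

(*
  Lower bound: gamma_tR increases strictly by the choice of B.  Upper bound: pick e = uv in B.
  By minimality of B, deleting only B - {e} does not increase gamma_tR, so it suffices that
  deleting a single edge uv, whose endpoints keep neighbours a and b, costs at most 2.  Take a
  minimum TRDF f.  If f u = 0, then u witnesses nothing, and raising u and a to at least 1
  repairs everything.  If f u, f v > 0, then u and v only lose a positive neighbour, and raising
  a and b to at least 1 repairs them.

  For bistars, deleting a pendant edge isolates its leaf, so the central edge is the only
  candidate.  gamma_tR (S_{p,q}) = 4, and deleting the central edge leaves two stars, each needing
  weight 3 when it has at least two leaves, and weight 2 when it is a single edge.
*)
theory Submission
  imports Defs
begin

definition trdf_at :: "'a set \<Rightarrow> 'a set set \<Rightarrow> ('a \<Rightarrow> nat) \<Rightarrow> 'a \<Rightarrow> bool" where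
  "trdf_at V E f x \<longleftrightarrow>
     (f x = 0 \<longrightarrow> (\<exists>w\<in>V. {w, x} \<in> E \<and> f w = 2)) \<and> (0 < f x \<longrightarrow> (\<exists>w\<in>V. {w, x} \<in> E \<and> 0 < f w))"

lemma trdf_iff_trdf_at: "trdf V E f \<longleftrightarrow> (\<forall>x\<in>V. f x \<le> 2) \<and> (\<forall>x\<in>V. trdf_at V E f x)"
  by (auto simp: trdf_def trdf_at_def)

lemma gamma_tR_le_weight: "trdf V E f \<Longrightarrow> gamma_tR V E \<le> weight V f"
  unfolding gamma_tR_def by (rule Least_le) blast

lemma gamma_tR_attained:
  assumes "trdf V E f"
  obtains g where "trdf V E g" "weight V g = gamma_tR V E"
proof -
  have "\<exists>g. trdf V E g \<and> weight V g = gamma_tR V E"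
    unfolding gamma_tR_def by (rule LeastI_ex) (use assms in blast)
  then show thesis
    using that by blast
qed

lemma gamma_tR_eqI:
  assumes "trdf V E f" "weight V f = w" "\<And>g. trdf V E g \<Longrightarrow> w \<le> weight V g"
  shows "gamma_tR V E = w"
  using assms by (metis gamma_tR_attained gamma_tR_le_weight le_antisym)

lemma graph_finite_edges: "graph V E \<Longrightarrow> finite E"
  unfolding graph_def by (meson Pow_iff finite_Pow_iff finite_subset subsetI)

lemma graph_Diff: "graph V E \<Longrightarrow> graph V (E - F)"
  unfolding graph_def by blast

lemma graph_edge_in_vertices: "graph V E \<Longrightarrow> {u, v} \<in> E \<Longrightarrow> u \<in> V \<and> v \<in> V"
  unfolding graph_def by blast

lemma trdf_two: "graph V E \<Longrightarrow> no_isolated V E \<Longrightarrow> trdf V E (\<lambda>_. 2)"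
  unfolding trdf_def no_isolated_def graph_def by (metis insert_subset order_refl zero_less_numeral)

lemma trdf_at_Diff_edge: "trdf_at V E f y \<Longrightarrow> y \<notin> e \<Longrightarrow> trdf_at V (E - {e}) f y"
  unfolding trdf_at_def by auto

lemma trdf_at_Diff_edge_zero:
  "trdf_at V E f y \<Longrightarrow> f u = 0 \<Longrightarrow> y \<noteq> u \<Longrightarrow> trdf_at V (E - {{u, v}}) f y"
  unfolding trdf_at_def by (auto simp: doubleton_eq_iff)

lemma raise_edge_repairs:
  assumes fin: "finite V" and f2: "\<forall>y\<in>V. f y \<le> 2"
    and edge: "{w, x} \<in> E" and wV: "w \<in> V" and xV: "x \<in> V"
  obtains g where "\<forall>y\<in>V. g y \<le> 2" "trdf_at V E g x" "\<And>y. trdf_at V E f y \<Longrightarrow> trdf_at V E g y"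
    "\<forall>y. f y \<le> g y" "weight V g \<le> weight V f + of_bool (f x = 0) + of_bool (f w = 0)"
proof
  define g where "g = f(x := max (f x) 1, w := max (f w) 1)"
  show f_le_g: "\<forall>y. f y \<le> g y"
    unfolding g_def by auto
  show "\<forall>y\<in>V. g y \<le> 2"
    using f2 wV xV unfolding g_def by auto
  have pos: "0 < g x" "0 < g w"
    unfolding g_def by auto
  then show "trdf_at V E g x"
    using edge wV unfolding trdf_at_def by auto
  have "{x, w} \<in> E"
    using edge by (simp add: insert_commute)
  then have at_w: "trdf_at V E g w"
    using pos xV unfolding trdf_at_def by auto
  show "trdf_at V E g y" if at_y: "trdf_at V E f y" for y
  proof (cases "y = w \<or> (y = x \<and> f y = 0)")
    case True
    then show ?thesis
      using at_w pos edge wV unfolding trdf_at_def by auto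
  next
    case False
    then have "g y = f y" "\<forall>z. f z = 2 \<longrightarrow> g z = 2"
      unfolding g_def by auto
    then show ?thesis
      using at_y f_le_g unfolding trdf_at_def by (metis gr_zeroI less_le_trans)
  qed
  have "\<forall>y. g y \<le> f y + of_bool (y = x \<and> f x = 0) + of_bool (y = w \<and> f w = 0)"
    unfolding g_def by auto
  then have "weight V g \<le> (\<Sum>y\<in>V. f y + of_bool (y = x \<and> f x = 0) + of_bool (y = w \<and> f w = 0))"
    unfolding weight_def by (intro sum_mono) blast
  also have "\<dots> = weight V f + of_bool (f x = 0) + of_bool (f w = 0)"
    using fin xV wV by (simp add: weight_def sum.distrib)
  finally show "weight V g \<le> weight V f + of_bool (f x = 0) + of_bool (f w = 0)" .
qed

lemma trdf_delete_edge_at_zero: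
  assumes fin: "finite V" and f: "trdf V E f" and zero: "f u = 0"
    and edge: "{a, u} \<in> E - {{u, v}}" and aV: "a \<in> V" and uV: "u \<in> V"
  obtains g where "trdf V (E - {{u, v}}) g" "weight V g \<le> weight V f + 2"
proof -
  let ?E = "E - {{u, v}}"
  have f2: "\<forall>y\<in>V. f y \<le> 2" and at: "\<forall>y\<in>V. trdf_at V E f y"
    using f unfolding trdf_iff_trdf_at by auto
  obtain g where g2: "\<forall>y\<in>V. g y \<le> 2" and at_u: "trdf_at V ?E g u"
    and keep: "\<And>y. trdf_at V ?E f y \<Longrightarrow> trdf_at V ?E g y" and "\<forall>y. f y \<le> g y"
    and w: "weight V g \<le> weight V f + of_bool (f u = 0) + of_bool (f a = 0)"
    by (erule raise_edge_repairs[OF fin f2 edge aV uV])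
  have "trdf_at V ?E g y" if "y \<in> V" for y
  proof (cases "y = u")
    case False
    then show ?thesis
      using keep trdf_at_Diff_edge_zero[where f = f, OF _ zero] at that by blast
  qed (use at_u in simp)
  then have "trdf V ?E g"
    using g2 unfolding trdf_iff_trdf_at by blast
  moreover have "weight V g \<le> weight V f + 2"
    using w zero by (cases "f a = 0") simp_all
  ultimately show thesis
    using that by blast
qed

lemma trdf_delete_edge_at_positive:
  assumes fin: "finite V" and f: "trdf V E f" and pos: "0 < f u" "0 < f v"
    and a: "{a, u} \<in> E - {{u, v}}" "a \<in> V" "u \<in> V"
    and b: "{b, v} \<in> E - {{u, v}}" "b \<in> V" "v \<in> V"
  obtains g where "trdf V (E - {{u, v}}) g" "weight V g \<le> weight V f + 2"
proof -
  let ?E = "E - {{u, v}}"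
  have f2: "\<forall>y\<in>V. f y \<le> 2" and at: "\<forall>y\<in>V. trdf_at V E f y"
    using f unfolding trdf_iff_trdf_at by auto
  obtain g1 where g1_2: "\<forall>y\<in>V. g1 y \<le> 2" and at_u: "trdf_at V ?E g1 u"
    and keep1: "\<And>y. trdf_at V ?E f y \<Longrightarrow> trdf_at V ?E g1 y"
    and ge1: "\<forall>y. f y \<le> g1 y"
    and w1: "weight V g1 \<le> weight V f + of_bool (f u = 0) + of_bool (f a = 0)"
    by (erule raise_edge_repairs[OF fin f2 a])
  have "0 < g1 v"
    using ge1 pos by (metis less_le_trans)
  obtain g2 where g2_2: "\<forall>y\<in>V. g2 y \<le> 2" and at_v: "trdf_at V ?E g2 v"
    and keep2: "\<And>y. trdf_at V ?E g1 y \<Longrightarrow> trdf_at V ?E g2 y" and "\<forall>y. g1 y \<le> g2 y"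
    and w2: "weight V g2 \<le> weight V g1 + of_bool (g1 v = 0) + of_bool (g1 b = 0)"
    by (erule raise_edge_repairs[OF fin g1_2 b])
  have "trdf_at V ?E g2 y" if "y \<in> V" for y
  proof (cases "y \<in> {u, v}")
    case True
    then show ?thesis
      using at_u at_v keep2 by auto
  next
    case False
    with at that show ?thesis
      using keep1 keep2 trdf_at_Diff_edge by metis
  qed
  then have "trdf V ?E g2"
    using g2_2 unfolding trdf_iff_trdf_at by blast
  moreover have "weight V g2 \<le> weight V f + 2"
    using w1 w2 pos \<open>0 < g1 v\<close> by (cases "f a = 0"; cases "g1 b = 0") simp_all
  ultimately show thesis
    using that by blast
qed

lemma trdf_delete_edge:
  assumes fin: "finite V" and f: "trdf V E f"
    and a: "{a, u} \<in> E - {{u, v}}" "a \<in> V" "u \<in> V"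
    and b: "{b, v} \<in> E - {{u, v}}" "b \<in> V" "v \<in> V"
  obtains g where "trdf V (E - {{u, v}}) g" "weight V g \<le> weight V f + 2"
proof -
  have swap: "E - {{u, v}} = E - {{v, u}}"
    by (simp add: insert_commute)
  consider "f u = 0" | "f v = 0" | "0 < f u" "0 < f v"
    by blast
  then show thesis
  proof cases
    case 1
    show thesis
      by (rule trdf_delete_edge_at_zero[OF fin f 1 a]) (rule that)
  next
    case 2
    show thesis
      by (rule trdf_delete_edge_at_zero[OF fin f 2 b(1)[unfolded swap] b(2,3)]) (rule that[unfolded swap])
  next
    case 3
    show thesis
      by (rule trdf_delete_edge_at_positive[OF fin f 3 a b]) (rule that)
  qed
qed

lemma gamma_tR_Diff_edge_le:
  assumes G: "graph V E" and e: "e \<in> E" and ni: "no_isolated V (E - {e})"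
  shows "gamma_tR V (E - {e}) \<le> gamma_tR V E + 2"
proof -
  have "card e = 2"
    using G e unfolding graph_def by blast
  then obtain u v where uv: "e = {u, v}"
    by (meson card_2_iff)
  have uV: "u \<in> V" and vV: "v \<in> V"
    using graph_edge_in_vertices[OF G e[unfolded uv]] by blast+
  obtain a where a: "{a, u} \<in> E - {e}"
    using ni uV unfolding no_isolated_def by blast
  obtain b where b: "{b, v} \<in> E - {e}"
    using ni vV unfolding no_isolated_def by blast
  have aV: "a \<in> V" and bV: "b \<in> V"
    using graph_edge_in_vertices[OF G] a b by blast+
  have "no_isolated V E"
    using ni unfolding no_isolated_def by blast
  then obtain f where f: "trdf V E f" and fw: "weight V f = gamma_tR V E"
    using gamma_tR_attained[OF trdf_two[OF G]] by blast
  have fin: "finite V"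
    using G unfolding graph_def by blast
  obtain g where "trdf V (E - {e}) g" "weight V g \<le> weight V f + 2"
    by (rule trdf_delete_edge[OF fin f a[unfolded uv] aV uV b[unfolded uv] bV vV, folded uv])
  then show ?thesis
    using fw gamma_tR_le_weight[of V "E - {e}" g] by linarith
qed

lemma btR_set_minimal:
  assumes B: "btR_set V E B" and fin: "finite B" and sub: "B' \<subset> B"
  shows "\<not> btR_candidate V E B'"
proof
  assume B': "btR_candidate V E B'"
  then have "b_tR V E = enat (LEAST k. \<exists>E'. btR_candidate V E E' \<and> card E' = k)"
    unfolding b_tR_def by auto
  also have "(LEAST k. \<exists>E'. btR_candidate V E E' \<and> card E' = k) \<le> card B'"
    by (rule Least_le) (use B' in blast)
  also have "card B' < card B"
    using fin sub by (rule psubset_card_mono)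
  finally show False
    using B unfolding btR_set_def by simp
qed

lemma btR_set_gamma_tR_bounds:
  assumes G: "graph V E" and B: "btR_set V E B"
  shows "gamma_tR V E + 1 \<le> gamma_tR V (E - B) \<and> gamma_tR V (E - B) \<le> gamma_tR V E + 2"
proof -
  have BE: "B \<subseteq> E" and ni: "no_isolated V (E - B)" and lt: "gamma_tR V E < gamma_tR V (E - B)"
    using B unfolding btR_set_def btR_candidate_def by auto
  have fin: "finite B"
    using BE graph_finite_edges[OF G] finite_subset by blast
  obtain e where e: "e \<in> B"
    using lt by fastforce
  define E' where "E' = E - (B - {e})"
  have E'_e: "E' - {e} = E - B"
    unfolding E'_def using e by blast
  have ni': "no_isolated V E'"
    using ni unfolding no_isolated_def E'_def by blast
  have "B - {e} \<subset> B"
    using e by blast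
  then have "\<not> btR_candidate V E (B - {e})"
    by (rule btR_set_minimal[OF B fin])
  then have "gamma_tR V E' \<le> gamma_tR V E"
    using BE ni' unfolding btR_candidate_def E'_def by auto
  moreover have "gamma_tR V (E' - {e}) \<le> gamma_tR V E' + 2"
  proof (rule gamma_tR_Diff_edge_le)
    show "graph V E'"
      unfolding E'_def by (rule graph_Diff[OF G])
    show "e \<in> E'"
      unfolding E'_def using e BE by blast
    show "no_isolated V (E' - {e})"
      unfolding E'_e by (rule ni)
  qed
  ultimately show ?thesis
    using lt E'_e by simp
qed

lemma trdf_witnessI:
  assumes "\<forall>v\<in>V. f v \<le> 2"
    and "\<forall>v\<in>V. w v \<in> V \<and> {w v, v} \<in> E \<and> (f v = 0 \<longrightarrow> f (w v) = 2) \<and> (0 < f v \<longrightarrow> 0 < f (w v))"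
  shows "trdf V E f"
  using assms unfolding trdf_def by metis

lemma trdf_pendant_weight:
  assumes "trdf V E f" "l \<in> V" "\<forall>a\<in>V. {a, l} \<in> E \<longrightarrow> a = c"
  shows "2 \<le> f c + f l"
  using assms unfolding trdf_def by (cases "f l = 0") fastforce+

lemma trdf_star_centre_nonzero:
  assumes f: "trdf V E f" and cV: "c \<in> V"
    and leaves: "\<forall>l\<in>L. \<forall>a\<in>V. {a, l} \<in> E \<longrightarrow> a = c"
    and centre: "\<forall>a\<in>V. {a, c} \<in> E \<longrightarrow> a \<in> L"
  shows "f c \<noteq> 0"
proof
  assume fc: "f c = 0"
  then obtain a where a: "a \<in> V" "{a, c} \<in> E" "f a = 2"
    using f cV unfolding trdf_def by blast
  then obtain b where b: "b \<in> V" "{b, a} \<in> E" "0 < f b"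
    using f unfolding trdf_def by (metis zero_less_numeral)
  have "a \<in> L"
    using centre a by blast
  then have "b = c"
    using leaves b by blast
  then show False
    using b fc by simp
qed

lemma trdf_star_weight:
  assumes f: "trdf V E f" and cV: "c \<in> V" and L: "L \<subseteq> V" "finite L"
    and leaves: "\<forall>l\<in>L. \<forall>a\<in>V. {a, l} \<in> E \<longrightarrow> a = c"
    and centre: "\<forall>a\<in>V. {a, c} \<in> E \<longrightarrow> a \<in> L"
    and two_leaves: "l1 \<in> L" "l2 \<in> L" "l1 \<noteq> l2"
  shows "3 \<le> f c + sum f L"
proof -
  have "f c \<noteq> 0" "f c \<le> 2"
    using trdf_star_centre_nonzero[OF f cV leaves centre] f cV unfolding trdf_def by blast+
  then consider "f c = 1" | "f c = 2"
    by linarith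
  then show ?thesis
  proof cases
    case 1
    have "0 < f l" if lL: "l \<in> L" for l
    proof (rule ccontr)
      assume "\<not> 0 < f l"
      then obtain a where a: "a \<in> V" "{a, l} \<in> E" "f a = 2"
        using f L lL unfolding trdf_def by blast
      then have "a = c"
        using leaves lL by blast
      then show False
        using a 1 by simp
    qed
    then have "0 < f l1" "0 < f l2"
      using two_leaves by blast+
    then have "2 \<le> f l1 + f l2"
      by linarith
    also have "\<dots> = sum f {l1, l2}"
      using two_leaves by simp
    also have "\<dots> \<le> sum f L"
      using two_leaves L by (intro sum_mono2) auto
    finally show ?thesis
      using 1 by simp
  next
    case 2
    then obtain a where a: "a \<in> V" "{a, c} \<in> E" "0 < f a"
      using f cV unfolding trdf_def by (metis zero_less_numeral)
    have "f a \<le> sum f L"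
      using centre a L by (intro member_le_sum) auto
    then show ?thesis
      using a 2 by simp
  qed
qed

lemma bistar_edge_iff:
  "{a, b} \<in> bistar_E p q \<longleftrightarrow> {a, b} = {0, 1}
     \<or> (a = 0 \<and> b \<in> {2..p+1}) \<or> (b = 0 \<and> a \<in> {2..p+1})
     \<or> (a = 1 \<and> b \<in> {p+2..p+q+1}) \<or> (b = 1 \<and> a \<in> {p+2..p+q+1})"
  unfolding bistar_E_def by (auto simp: doubleton_eq_iff)

lemma bistar_edgeE:
  assumes "e \<in> bistar_E p q"
  obtains "e = {0, 1}" | l where "e = {0, l}" "l \<in> {2..p+1}" | l where "e = {1, l}" "l \<in> {p+2..p+q+1}"
  using assms unfolding bistar_E_def by auto

lemma bistar_leaf_neighbour:
  "{a, l} \<in> bistar_E p q \<Longrightarrow> l \<in> {2..p+1} \<Longrightarrow> a = 0"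
  "{a, l} \<in> bistar_E p q \<Longrightarrow> l \<in> {p+2..p+q+1} \<Longrightarrow> a = 1"
  by (auto simp: bistar_edge_iff doubleton_eq_iff)

lemma weight_bistar:
  "weight (bistar_V p q) f = f 0 + f 1 + sum f {2..p+1} + sum f {p+2..p+q+1}"
proof -
  have "bistar_V p q = {0} \<union> {1} \<union> {2..p+1} \<union> {p+2..p+q+1}"
    unfolding bistar_V_def by auto
  then show ?thesis
    unfolding weight_def by (simp add: sum.union_disjoint)
qed

lemma gamma_tR_bistar:
  assumes "1 \<le> p" "1 \<le> q"
  shows "gamma_tR (bistar_V p q) (bistar_E p q) = 4"
proof (rule gamma_tR_eqI)
  let ?f = "\<lambda>x::nat. if x \<le> 1 then 2 else 0 :: nat"
  show "trdf (bistar_V p q) (bistar_E p q) ?f"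
  proof (rule trdf_witnessI[where w = "\<lambda>v. if v = 0 then 1 else if v = 1 \<or> v \<le> p + 1 then 0 else 1"])
    show "\<forall>v\<in>bistar_V p q. ?f v \<le> 2"
      by simp
  qed (use assms in \<open>auto simp: bistar_edge_iff bistar_V_def insert_commute\<close>)
  show "weight (bistar_V p q) ?f = 4"
    by (simp add: weight_bistar)
  fix g
  assume g: "trdf (bistar_V p q) (bistar_E p q) g"
  have "2 \<le> g 0 + g 2"
    by (rule trdf_pendant_weight[OF g]) (use assms bistar_leaf_neighbour(1) in \<open>auto simp: bistar_V_def\<close>)
  moreover have "2 \<le> g 1 + g (p + 2)"
    by (rule trdf_pendant_weight[OF g]) (use assms bistar_leaf_neighbour(2) in \<open>auto simp: bistar_V_def\<close>)
  moreover have "g 2 \<le> sum g {2..p+1}" "g (p + 2) \<le> sum g {p+2..p+q+1}"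
    using assms by (intro member_le_sum; simp)+
  ultimately show "4 \<le> weight (bistar_V p q) g"
    by (simp add: weight_bistar)
qed

lemma bistar_cut_leaves:
  "\<forall>l\<in>{2..p+1}. \<forall>a\<in>bistar_V p q. {a, l} \<in> bistar_E p q - {{0, 1}} \<longrightarrow> a = 0"
  "\<forall>l\<in>{p+2..p+q+1}. \<forall>a\<in>bistar_V p q. {a, l} \<in> bistar_E p q - {{0, 1}} \<longrightarrow> a = 1"
  "\<forall>a\<in>bistar_V p q. {a, 0} \<in> bistar_E p q - {{0, 1}} \<longrightarrow> a \<in> {2..p+1}"
  "\<forall>a\<in>bistar_V p q. {a, 1} \<in> bistar_E p q - {{0, 1}} \<longrightarrow> a \<in> {p+2..p+q+1}"
  using bistar_leaf_neighbour by (auto simp: bistar_edge_iff doubleton_eq_iff)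

lemma gamma_tR_bistar_cut:
  assumes "2 \<le> p" "2 \<le> q"
  shows "gamma_tR (bistar_V p q) (bistar_E p q - {{0, 1}}) = 6"
proof (rule gamma_tR_eqI)
  let ?f = "\<lambda>x::nat. if x \<le> 1 then 2 else if x = 2 \<or> x = p + 2 then 1 else 0 :: nat"
  show "trdf (bistar_V p q) (bistar_E p q - {{0, 1}}) ?f"
  proof (rule trdf_witnessI[where w = "\<lambda>v. if v = 0 then 2 else if v = 1 then p + 2 else if v \<le> p + 1 then 0 else 1"])
    show "\<forall>v\<in>bistar_V p q. ?f v \<le> 2"
      by simp
  qed (use assms in \<open>auto simp: bistar_edge_iff bistar_V_def insert_commute doubleton_eq_iff\<close>)
  have "sum ?f {2..p+1} = 1" "sum ?f {p+2..p+q+1} = 1"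
    using assms by (simp_all add: sum.If_cases)
  then show "weight (bistar_V p q) ?f = 6"
    by (simp add: weight_bistar)
  fix g
  assume g: "trdf (bistar_V p q) (bistar_E p q - {{0, 1}}) g"
  have "3 \<le> g 0 + sum g {2..p+1}"
    by (rule trdf_star_weight[OF g _ _ _ bistar_cut_leaves(1,3), of 2 3]) (use assms in \<open>auto simp: bistar_V_def\<close>)
  moreover have "3 \<le> g 1 + sum g {p+2..p+q+1}"
    by (rule trdf_star_weight[OF g _ _ _ bistar_cut_leaves(2,4), of "p + 2" "p + 3"]) (use assms in \<open>auto simp: bistar_V_def\<close>)
  ultimately show "6 \<le> weight (bistar_V p q) g"
    by (simp add: weight_bistar)
qed

lemma gamma_tR_bistar_1_cut:
  assumes "2 \<le> q"
  shows "gamma_tR (bistar_V 1 q) (bistar_E 1 q - {{0, 1}}) = 5"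
proof (rule gamma_tR_eqI)
  let ?f = "\<lambda>x::nat. if x = 1 then 2 else if x = 0 \<or> x = 2 \<or> x = 3 then 1 else 0 :: nat"
  show "trdf (bistar_V 1 q) (bistar_E 1 q - {{0, 1}}) ?f"
  proof (rule trdf_witnessI[where w = "\<lambda>v. if v = 0 then 2 else if v = 1 then 3 else if v = 2 then 0 else 1"])
    show "\<forall>v\<in>bistar_V 1 q. ?f v \<le> 2"
      by simp
  qed (use assms in \<open>auto simp: bistar_edge_iff bistar_V_def insert_commute doubleton_eq_iff\<close>)
  have "sum ?f {1+2..1+q+1} = 1"
    using assms by (simp add: sum.If_cases)
  moreover have "?f 0 + ?f 1 + sum ?f {2..1+1} = 4"
    by simp
  ultimately show "weight (bistar_V 1 q) ?f = 5"
    using weight_bistar[of 1 q ?f] by linarith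
  fix g
  assume g: "trdf (bistar_V 1 q) (bistar_E 1 q - {{0, 1}}) g"
  have "2 \<le> g 0 + g 2"
    by (rule trdf_pendant_weight[OF g _ bspec[OF bistar_cut_leaves(1)]]) (simp_all add: bistar_V_def)
  moreover have "3 \<le> g 1 + sum g {1+2..1+q+1}"
    by (rule trdf_star_weight[OF g _ _ _ bistar_cut_leaves(2,4), of 3 4]) (use assms in \<open>auto simp: bistar_V_def\<close>)
  moreover have "sum g {2..1+1} = g 2"
    by (simp add: numeral_2_eq_2)
  ultimately show "5 \<le> weight (bistar_V 1 q) g"
    using weight_bistar[of 1 q g] by linarith
qed

lemma no_isolated_bistar_cut:
  assumes "1 \<le> p" "1 \<le> q"
  shows "no_isolated (bistar_V p q) (bistar_E p q - {{0, 1}})"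
  unfolding no_isolated_def
proof
  fix v
  assume "v \<in> bistar_V p q"
  then consider "v = 0" | "v = 1" | "v \<in> {2..p+1}" | "v \<in> {p+2..p+q+1}"
    unfolding bistar_V_def by fastforce
  then show "\<exists>u. {u, v} \<in> bistar_E p q - {{0, 1}}"
  proof cases
    case 1
    then have "{2, v} \<in> bistar_E p q - {{0, 1}}"
      using assms by (simp add: bistar_edge_iff doubleton_eq_iff)
    then show ?thesis ..
  next
    case 2
    then have "{p + 2, v} \<in> bistar_E p q - {{0, 1}}"
      using assms by (simp add: bistar_edge_iff doubleton_eq_iff)
    then show ?thesis ..
  next
    case 3
    then have "{0, v} \<in> bistar_E p q - {{0, 1}}"
      by (auto simp: bistar_edge_iff doubleton_eq_iff)
    then show ?thesis ..
  next
    case 4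
    then have "{1, v} \<in> bistar_E p q - {{0, 1}}"
      by (auto simp: bistar_edge_iff doubleton_eq_iff)
    then show ?thesis ..
  qed
qed

lemma bistar_btR_candidate_iff:
  assumes "1 \<le> p" "1 \<le> q"
  shows "btR_candidate (bistar_V p q) (bistar_E p q) B \<longleftrightarrow>
    B = {{0, 1}} \<and> gamma_tR (bistar_V p q) (bistar_E p q) < gamma_tR (bistar_V p q) (bistar_E p q - {{0, 1}})"
proof
  assume B: "btR_candidate (bistar_V p q) (bistar_E p q) B"
  then have BE: "B \<subseteq> bistar_E p q" and ni: "no_isolated (bistar_V p q) (bistar_E p q - B)"
    and lt: "gamma_tR (bistar_V p q) (bistar_E p q) < gamma_tR (bistar_V p q) (bistar_E p q - B)"
    unfolding btR_candidate_def by auto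
  have "e = {0, 1}" if e: "e \<in> B" for e
  proof (rule bistar_edgeE[OF subsetD[OF BE e]])
    fix l
    assume el: "e = {0, l}" and l: "l \<in> {2..p+1}"
    then obtain a where "{a, l} \<in> bistar_E p q - B"
      using ni unfolding no_isolated_def bistar_V_def by fastforce
    then show "e = {0, 1}"
      using bistar_leaf_neighbour(1) l el e by blast
  next
    fix l
    assume el: "e = {1, l}" and l: "l \<in> {p+2..p+q+1}"
    then obtain a where "{a, l} \<in> bistar_E p q - B"
      using ni unfolding no_isolated_def bistar_V_def by fastforce
    then show "e = {0, 1}"
      using bistar_leaf_neighbour(2) l el e by blast
  qed
  moreover have "B \<noteq> {}"
    using lt by auto
  ultimately have "B = {{0, 1}}"
    by blast
  then show "B = {{0, 1}} \<and> gamma_tR (bistar_V p q) (bistar_E p q) < gamma_tR (bistar_V p q) (bistar_E p q - {{0, 1}})"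
    using lt by simp
next
  assume "B = {{0, 1}} \<and> gamma_tR (bistar_V p q) (bistar_E p q) < gamma_tR (bistar_V p q) (bistar_E p q - {{0, 1}})"
  moreover have "{0, 1} \<in> bistar_E p q"
    by (simp add: bistar_edge_iff)
  ultimately show "btR_candidate (bistar_V p q) (bistar_E p q) B"
    unfolding btR_candidate_def using no_isolated_bistar_cut[OF assms] by simp
qed

lemma bistar_btR_set_gamma_tR:
  assumes "1 \<le> p" "1 \<le> q" and "0 < k"
    and cut: "gamma_tR (bistar_V p q) (bistar_E p q - {{0, 1}}) = gamma_tR (bistar_V p q) (bistar_E p q) + k"
  shows "b_tR (bistar_V p q) (bistar_E p q) \<noteq> \<infinity> \<and>
    (\<forall>B. btR_set (bistar_V p q) (bistar_E p q) B \<longrightarrow>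
       gamma_tR (bistar_V p q) (bistar_E p q - B) = gamma_tR (bistar_V p q) (bistar_E p q) + k)"
  using bistar_btR_candidate_iff[OF assms(1,2)] assms(3) cut unfolding b_tR_def btR_set_def by auto

theorem mainTheorem4:
  shows "(\<forall>(V :: 'a set) E B. graph V E \<and> no_isolated V E \<and> b_tR V E \<noteq> \<infinity> \<and> btR_set V E B \<longrightarrow>
            gamma_tR V E + 1 \<le> gamma_tR V (E - B) \<and> gamma_tR V (E - B) \<le> gamma_tR V E + 2)
     \<and> (\<forall>p q. 2 \<le> p \<and> p \<le> q \<longrightarrow>
            b_tR (bistar_V p q) (bistar_E p q) \<noteq> \<infinity> \<and>
            (\<forall>B. btR_set (bistar_V p q) (bistar_E p q) B \<longrightarrow>
               gamma_tR (bistar_V p q) (bistar_E p q - B) = gamma_tR (bistar_V p q) (bistar_E p q) + 2))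
     \<and> (\<forall>q. 2 \<le> q \<longrightarrow>
            b_tR (bistar_V 1 q) (bistar_E 1 q) \<noteq> \<infinity> \<and>
            (\<forall>B. btR_set (bistar_V 1 q) (bistar_E 1 q) B \<longrightarrow>
               gamma_tR (bistar_V 1 q) (bistar_E 1 q - B) = gamma_tR (bistar_V 1 q) (bistar_E 1 q) + 1))"
proof (intro conjI; intro allI impI)
  fix V :: "'a set" and E B
  assume "graph V E \<and> no_isolated V E \<and> b_tR V E \<noteq> \<infinity> \<and> btR_set V E B"
  then show "gamma_tR V E + 1 \<le> gamma_tR V (E - B) \<and> gamma_tR V (E - B) \<le> gamma_tR V E + 2"
    using btR_set_gamma_tR_bounds by blast
next
  fix p q :: nat
  assume "2 \<le> p \<and> p \<le> q"
  then have pq: "1 \<le> p" "1 \<le> q" "2 \<le> p" "2 \<le> q"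
    by auto
  show "b_tR (bistar_V p q) (bistar_E p q) \<noteq> \<infinity> \<and>
      (\<forall>B. btR_set (bistar_V p q) (bistar_E p q) B \<longrightarrow>
         gamma_tR (bistar_V p q) (bistar_E p q - B) = gamma_tR (bistar_V p q) (bistar_E p q) + 2)"
    by (rule bistar_btR_set_gamma_tR)
      (use pq gamma_tR_bistar[OF pq(1,2)] gamma_tR_bistar_cut[OF pq(3,4)] in simp_all)
next
  fix q :: nat
  assume q: "2 \<le> q"
  show "b_tR (bistar_V 1 q) (bistar_E 1 q) \<noteq> \<infinity> \<and>
      (\<forall>B. btR_set (bistar_V 1 q) (bistar_E 1 q) B \<longrightarrow>
         gamma_tR (bistar_V 1 q) (bistar_E 1 q - B) = gamma_tR (bistar_V 1 q) (bistar_E 1 q) + 1)"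
    by (rule bistar_btR_set_gamma_tR)
      (use q gamma_tR_bistar[of 1 q] gamma_tR_bistar_1_cut[OF q] in simp_all)
qed

end
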